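(* Let $\phi_1,\ldots,\phi_n \vdash \psi_0$ be a sequent of $NOM$ ($n\ge 0$). The following are equivalent: (1) $\phi_1,\ldots,\phi_n\vdash\psi_0$ is derivable in $NOM$ extended by the exchange rule (from $\Gamma,\phi,\psi,\Delta\vdash\chi$ infer $\Gamma,\psi,\phi,\Delta\vdash\chi$, for arbitrary finite sequences $\Gamma,\Delta$ and formulas $\phi,\psi,\chi$); (2) $\phi_1,\ldots,\phi_n\vdash\psi_0$ is derivable in Gentzen's classical sequent calculus $LK$ (the system $G1$ of Kleene's Introduction to Metamathematics); (3) the formula $(\phi_1\wedge\cdots\wedge\phi_n)\rightarrow\psi_0$ is derivable in Kleene's Hilbert-style system $H$ for classical logic, i.e. is a classical tautology. When $n=0$, $(\phi_1\wedge\cdots\wedge\phi_n)\rightarrow\psi_0$ means $\psi_0$.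
   Context: The propositional deductive system $NOM$: formulas are built from propositional letters using the binary connectives $\wedge$, $\rightarrow$ and the unary connective $\neg$. A sequent is an expression $\phi_1,\ldots,\phi_n \vdash \psi$ with $n\ge 0$, whose antecedent is a finite sequence (order matters, repetitions allowed) of formulas. Below $\Gamma$ denotes a finite, possibly empty, sequence of formulas, $\phi,\psi,\chi$ formulas, and commas denote concatenation. A sequent is derivable in $NOM$ if it can be obtained with the following rules (premises $\Rightarrow$ conclusion): (assumption) $\Gamma,\phi\vdash\phi$, no premises; (cut) $\Gamma\vdash\phi$ and $\Gamma,\phi\vdash\psi$ $\Rightarrow$ $\Gamma\vdash\psi$; (paste) $\Gamma\vdash\phi$ and $\Gamma\vdash\psi$ $\Rightarrow$ $\Gamma,\phi\vdash\psi$; (compatible exchange) $\Gamma,\phi,\psi\vdash\phi$ and $\Gamma,\phi,\psi\vdash\chi$ and $\Gamma,\psi,\phi\vdash\psi$ $\Rightarrow$ $\Gamma,\psi,\phi\vdash\chi$; ($\wedge$-introduction) $\Gamma\vdash\phi$ and $\Gamma\vdash\psi$ $\Rightarrow$ $\Gamma\vdash\phi\wedge\psi$; ($\wedge$-elimination) $\Gamma\vdash\phi\wedge\psi$ $\Rightarrow$ $\Gamma\vdash\phi$, and $\Gamma\vdash\phi\wedge\psi$ $\Rightarrow$ $\Gamma\vdash\psi$; ($\rightarrow$-introduction) $\Gamma,\phi\vdash\psi$ $\Rightarrow$ $\Gamma\vdash\phi\rightarrow\psi$; ($\rightarrow$-elimination) $\Gamma\vdash\phi\rightarrow\psi$ $\Rightarrow$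 $\Gamma,\phi\vdash\psi$; (excluded middle) $\Gamma,\phi\vdash\psi$ and $\Gamma,\neg\phi\vdash\psi$ $\Rightarrow$ $\Gamma\vdash\psi$; (deductive explosion) $\Gamma\vdash\neg\phi$ $\Rightarrow$ $\Gamma,\phi\vdash\psi$. *)

theory Defs
  imports Main
begin

datatype form = Letter nat | And form form | Imp form form | Neg form

text \<open>nom_deriv False G p : the sequent G |- p is derivable in NOM.
      nom_deriv True G p  : derivable in NOM extended by the exchange rule.\<close>

inductive nom_deriv :: "bool \<Rightarrow> form list \<Rightarrow> form \<Rightarrow> bool" for exch :: bool where
  assumption: "nom_deriv exch (G @ [p]) p"
| cut: "nom_deriv exch G p \<Longrightarrow> nom_deriv exch (G @ [p]) q \<Longrightarrow> nom_deriv exch G q"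
| paste: "nom_deriv exch G p \<Longrightarrow> nom_deriv exch G q \<Longrightarrow> nom_deriv exch (G @ [p]) q"
| compat_exchange: "nom_deriv exch (G @ [p, q]) p \<Longrightarrow> nom_deriv exch (G @ [p, q]) r
     \<Longrightarrow> nom_deriv exch (G @ [q, p]) q \<Longrightarrow> nom_deriv exch (G @ [q, p]) r"
| conj_intro: "nom_deriv exch G p \<Longrightarrow> nom_deriv exch G q \<Longrightarrow> nom_deriv exch G (And p q)"
| conj_elim1: "nom_deriv exch G (And p q) \<Longrightarrow> nom_deriv exch G p"
| conj_elim2: "nom_deriv exch G (And p q) \<Longrightarrow> nom_deriv exch G q"
| imp_intro: "nom_deriv exch (G @ [p]) q \<Longrightarrow> nom_deriv exch G (Imp p q)"
| imp_elim: "nom_deriv exch G (Imp p q) \<Longrightarrow> nom_deriv exch (G @ [p]) q"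
| excluded_middle: "nom_deriv exch (G @ [p]) q \<Longrightarrow> nom_deriv exch (G @ [Neg p]) q
     \<Longrightarrow> nom_deriv exch G q"
| explosion: "nom_deriv exch G (Neg p) \<Longrightarrow> nom_deriv exch (G @ [p]) q"
| exchange: "exch \<Longrightarrow> nom_deriv exch (G @ [p, q] @ D) r \<Longrightarrow> nom_deriv exch (G @ [q, p] @ D) r"

inductive lk :: "form list \<Rightarrow> form list \<Rightarrow> bool" where
  axiom: "lk [c] [c]"
| thin_l: "lk G T \<Longrightarrow> lk (c # G) T"
| thin_r: "lk G T \<Longrightarrow> lk G (T @ [c])"
| contr_l: "lk (c # c # G) T \<Longrightarrow> lk (c # G) T"
| contr_r: "lk G (T @ [c, c]) \<Longrightarrow> lk G (T @ [c])"
| inter_l: "lk (D @ [d, c] @ G) T \<Longrightarrow> lk (D @ [c, d] @ G) T"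
| inter_r: "lk G (T @ [d, c] @ L) \<Longrightarrow> lk G (T @ [c, d] @ L)"
| cut: "lk D (L @ [c]) \<Longrightarrow> lk (c # G) T \<Longrightarrow> lk (D @ G) (L @ T)"
| imp_r: "lk (a # G) (T @ [b]) \<Longrightarrow> lk G (T @ [Imp a b])"
| imp_l: "lk D (L @ [a]) \<Longrightarrow> lk (b # G) T \<Longrightarrow> lk (Imp a b # D @ G) (L @ T)"
| and_r: "lk G (T @ [a]) \<Longrightarrow> lk G (T @ [b]) \<Longrightarrow> lk G (T @ [And a b])"
| and_l1: "lk (a # G) T \<Longrightarrow> lk (And a b # G) T"
| and_l2: "lk (b # G) T \<Longrightarrow> lk (And a b # G) T"
| neg_r: "lk (a # G) T \<Longrightarrow> lk G (T @ [Neg a])"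
| neg_l: "lk G (T @ [a]) \<Longrightarrow> lk (Neg a # G) T"

inductive hilbert :: "form \<Rightarrow> bool" where
  ax1a: "hilbert (Imp a (Imp b a))"
| ax1b: "hilbert (Imp (Imp a b) (Imp (Imp a (Imp b c)) (Imp a c)))"
| ax3: "hilbert (Imp a (Imp b (And a b)))"
| ax4a: "hilbert (Imp (And a b) a)"
| ax4b: "hilbert (Imp (And a b) b)"
| ax7: "hilbert (Imp (Imp a b) (Imp (Imp a (Neg b)) (Neg a)))"
| ax8: "hilbert (Imp (Neg (Neg a)) a)"
| mp: "hilbert a \<Longrightarrow> hilbert (Imp a b) \<Longrightarrow> hilbert b"

fun eval :: "(nat \<Rightarrow> bool) \<Rightarrow> form \<Rightarrow> bool" where
  "eval v (Letter n) = v n"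
| "eval v (And p q) = (eval v p \<and> eval v q)"
| "eval v (Imp p q) = (eval v p \<longrightarrow> eval v q)"
| "eval v (Neg p) = (\<not> eval v p)"

definition tautology :: "form \<Rightarrow> bool" where
  "tautology p \<longleftrightarrow> (\<forall>v. eval v p)"

fun conj_list :: "form list \<Rightarrow> form" where
  "conj_list [] = undefined"
| "conj_list [p] = p"
| "conj_list (p # ps) = And p (conj_list ps)"

definition seq_formula :: "form list \<Rightarrow> form \<Rightarrow> form" where
  "seq_formula ps q = (if ps = [] then q else Imp (conj_list ps) q)"

end

(* Each of the three systems is sound for the two-valued semantics, so derivability in any
   of them makes the sequent a tautology. Conversely, Hilbert's H read with hypotheses (by the
   deduction theorem), NOM with exchange and single-succedent LK are all consequence relations
   that are monotone in the set of hypotheses and closed under the natural deduction rules for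
   and, imp and neg with double negation elimination. For every such relation Kalmar's argument
   gives completeness: a formula p, or its negation according to a valuation v, is derivable from
   the atoms of p signed according to v, and for a tautology the signed atoms are then discharged
   one at a time by case distinction on their sign. *)

theory Submission
  imports Defs "HOL-Library.Multiset"
begin

lemma eval_conj_list: "ps \<noteq> [] \<Longrightarrow> eval v (conj_list ps) \<longleftrightarrow> (\<forall>x\<in>set ps. eval v x)"
  by (induction ps rule: conj_list.induct) auto

lemma tautology_seq_formula_iff:
  "tautology (seq_formula ps q) \<longleftrightarrow> (\<forall>v. (\<forall>x\<in>set ps. eval v x) \<longrightarrow> eval v q)"
  by (auto simp: tautology_def seq_formula_def eval_conj_list)

lemma nom_deriv_sound: "nom_deriv exch G p \<Longrightarrow> \<forall>x\<in>set G. eval v x \<Longrightarrow> eval v p"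
  by (induction rule: nom_deriv.induct) auto

lemma lk_sound: "lk G T \<Longrightarrow> \<forall>x\<in>set G. eval v x \<Longrightarrow> \<exists>y\<in>set T. eval v y"
  by (induction rule: lk.induct) auto

lemma hilbert_sound: "hilbert p \<Longrightarrow> eval v p"
  by (induction rule: hilbert.induct) auto

lemma swap_closed_move_front:
  assumes swap: "\<And>G p q D. P (G @ [p, q] @ D) \<Longrightarrow> P (G @ [q, p] @ D)"
  shows "P (X @ A @ c # B) \<Longrightarrow> P (X @ c # A @ B)"
proof (induction A arbitrary: B rule: rev_induct)
  case (snoc a A)
  have "P ((X @ A) @ [c, a] @ B)"
    using swap[of "X @ A" a c B] snoc.prems by simp
  then show ?case
    using snoc.IH[of "a # B"] by simp
qed simp

lemma swap_closed_imp_mset_closed: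
  assumes swap: "\<And>G p q D. P (G @ [p, q] @ D) \<Longrightarrow> P (G @ [q, p] @ D)"
  shows "P (X @ G) \<Longrightarrow> mset G = mset G' \<Longrightarrow> P (X @ G')"
proof (induction G' arbitrary: X G)
  case (Cons c G')
  then have "c \<in> set G"
    by (metis list.set_intros(1) set_mset_mset)
  then obtain A B where G: "G = A @ c # B"
    by (meson split_list)
  then have "P ((X @ [c]) @ A @ B)"
    using swap_closed_move_front[of P, OF swap] Cons.prems(1) by simp
  moreover have "mset (A @ B) = mset G'"
    using Cons.prems(2) G by simp
  ultimately show ?case
    using Cons.IH by fastforce
qed simp

lemma structural_imp_subset_closed:
  assumes swap: "\<And>G p q D. P (G @ [p, q] @ D) \<Longrightarrow> P (G @ [q, p] @ D)"
    and weaken: "\<And>G p. P G \<Longrightarrow> P (p # G)"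
    and contract: "\<And>G p. P (p # p # G) \<Longrightarrow> P (p # G)"
    and "P G" "set G \<subseteq> set G'"
  shows "P G'"
proof -
  have perm: "P L \<Longrightarrow> mset L = mset L' \<Longrightarrow> P L'" for L L'
    using swap_closed_imp_mset_closed[of P, OF swap, of "[]"] by simp
  have absorb: "P (H @ G') \<Longrightarrow> set H \<subseteq> set G' \<Longrightarrow> P G'" for H
  proof (induction H)
    case (Cons x H)
    have "mset (x # H @ G') = mset (x # x # remove1 x (H @ G'))"
      using Cons.prems(2) by simp
    then have "P (x # remove1 x (H @ G'))"
      using perm contract Cons.prems(1) by simp
    then have "P (H @ G')"
      by (rule perm) (use Cons.prems(2) in simp)
    then show ?case
      using Cons.IH Cons.prems(2) by simp
  qed simp
  have "P (G' @ G)"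
    using \<open>P G\<close> weaken by (induction G') auto
  then have "P (G @ G')"
    by (rule perm) simp
  then show ?thesis
    using absorb \<open>set G \<subseteq> set G'\<close> by blast
qed

definition signed :: "(nat \<Rightarrow> bool) \<Rightarrow> form \<Rightarrow> form" where
  "signed v p = (if eval v p then p else Neg p)"

definition signed_atoms :: "(nat \<Rightarrow> bool) \<Rightarrow> nat list \<Rightarrow> form list" where
  "signed_atoms v ns = map (\<lambda>n. signed v (Letter n)) ns"

fun atoms :: "form \<Rightarrow> nat list" where
  "atoms (Letter n) = [n]"
| "atoms (And p q) = atoms p @ atoms q"
| "atoms (Imp p q) = atoms p @ atoms q"
| "atoms (Neg p) = atoms p"

locale classical_consequence =
  fixes derives :: "form list \<Rightarrow> form \<Rightarrow> bool"
  assumes mono: "derives G p \<Longrightarrow> set G \<subseteq> set G' \<Longrightarrow> derives G' p"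
    and hyp: "derives [p] p"
    and impI: "derives (a # G) b \<Longrightarrow> derives G (Imp a b)"
    and impE: "derives G (Imp a b) \<Longrightarrow> derives G a \<Longrightarrow> derives G b"
    and andI: "derives G a \<Longrightarrow> derives G b \<Longrightarrow> derives G (And a b)"
    and andE1: "derives G (And a b) \<Longrightarrow> derives G a"
    and andE2: "derives G (And a b) \<Longrightarrow> derives G b"
    and negI: "derives (a # G) b \<Longrightarrow> derives (a # G) (Neg b) \<Longrightarrow> derives G (Neg a)"
    and dnegE: "derives G (Neg (Neg a)) \<Longrightarrow> derives G a"
begin

lemma mem: "p \<in> set G \<Longrightarrow> derives G p"
  by (rule mono[OF hyp]) simp

lemma weaken: "derives G p \<Longrightarrow> derives (q # G) p"
  by (erule mono) auto

lemma dnegI: "derives G a \<Longrightarrow> derives G (Neg (Neg a))"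
  by (rule negI[OF weaken mem[of "Neg a"]]) simp_all

lemma explosion: "derives G a \<Longrightarrow> derives G (Neg a) \<Longrightarrow> derives G b"
  by (rule dnegE, rule negI[where b = a]) (auto intro: weaken)

lemma neg_cases: "derives (a # G) p \<Longrightarrow> derives (Neg a # G) p \<Longrightarrow> derives G p"
proof -
  assume pos: "derives (a # G) p" and neg: "derives (Neg a # G) p"
  have "derives (Neg p # G) (Neg a)"
    by (rule negI[OF mono[OF pos] mem]) auto
  moreover have "derives (Neg p # G) (Neg (Neg a))"
    by (rule negI[OF mono[OF neg] mem]) auto
  ultimately have "derives G (Neg (Neg p))"
    by (rule negI)
  then show ?thesis
    by (rule dnegE)
qed

lemma signed_And:
  assumes a: "derives G (signed v a)" and b: "derives G (signed v b)"
  shows "derives G (signed v (And a b))"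
proof (cases "eval v a \<and> eval v b")
  case True
  then show ?thesis
    using andI a b by (simp add: signed_def)
next
  case False
  then have "derives G (Neg a) \<or> derives G (Neg b)"
    using a b by (auto simp: signed_def split: if_splits)
  then have "derives G (Neg (And a b))"
    by (metis andE1 andE2 mem list.set_intros(1) negI weaken)
  then show ?thesis
    using False by (auto simp: signed_def)
qed

lemma signed_Imp:
  assumes a: "derives G (signed v a)" and b: "derives G (signed v b)"
  shows "derives G (signed v (Imp a b))"
proof (cases "eval v b")
  case True
  then show ?thesis
    using impI[OF weaken] b by (simp add: signed_def)
next
  case b_false: False
  show ?thesis
  proof (cases "eval v a")
    case True
    have "derives (Imp a b # G) a"
      using weaken a True by (simp add: signed_def)
    then have "derives (Imp a b # G) b"
      by (metis impE mem list.set_intros(1))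
    moreover have "derives (Imp a b # G) (Neg b)"
      using weaken b b_false by (simp add: signed_def)
    ultimately show ?thesis
      using negI True b_false by (simp add: signed_def)
  next
    case False
    have "derives (a # G) (Neg a)"
      using weaken a False by (simp add: signed_def)
    then have "derives (a # G) b"
      by (metis explosion mem list.set_intros(1))
    then show ?thesis
      using impI False by (simp add: signed_def)
  qed
qed

lemma signed_Neg: "derives G (signed v a) \<Longrightarrow> derives G (signed v (Neg a))"
  by (cases "eval v a") (simp_all add: signed_def dnegI)

lemma kalmar: "set (atoms p) \<subseteq> set ns \<Longrightarrow> derives (signed_atoms v ns) (signed v p)"
  by (induction p) (auto simp: signed_atoms_def intro: mem signed_And signed_Imp signed_Neg)

lemma derives_if_all_signed_atoms:
  "distinct ns \<Longrightarrow> (\<And>v. derives (signed_atoms v ns) p) \<Longrightarrow> derives [] p"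
proof (induction ns)
  case (Cons n ns)
  have "derives (signed_atoms v ns) p" for v
  proof (rule neg_cases)
    have split: "signed_atoms (v(n := b)) (n # ns) = signed (v(n := b)) (Letter n) # signed_atoms v ns"
      for b using Cons.prems(1) by (auto simp: signed_atoms_def signed_def)
    show "derives (Letter n # signed_atoms v ns) p"
      using Cons.prems(2)[of "v(n := True)"] unfolding split by (simp add: signed_def)
    show "derives (Neg (Letter n) # signed_atoms v ns) p"
      using Cons.prems(2)[of "v(n := False)"] unfolding split by (simp add: signed_def)
  qed
  then show ?case
    using Cons.IH Cons.prems(1) by simp
qed (simp add: signed_atoms_def)

lemma tautology_imp_derives: "tautology p \<Longrightarrow> derives [] p"
  using derives_if_all_signed_atoms[of "remdups (atoms p)" p] kalmar[of p "remdups (atoms p)"]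
  by (simp add: tautology_def signed_def)

lemma derives_conj_list: "ps \<noteq> [] \<Longrightarrow> set ps \<subseteq> set G \<Longrightarrow> derives G (conj_list ps)"
  by (induction ps rule: conj_list.induct) (auto intro: mem andI)

lemma seq_formula_tautology_imp_derives: "tautology (seq_formula G q) \<Longrightarrow> derives G q"
proof (cases "G = []")
  case False
  assume "tautology (seq_formula G q)"
  then have "derives G (Imp (conj_list G) q)"
    using False mono[OF tautology_imp_derives] by (simp add: seq_formula_def)
  then show ?thesis
    using impE derives_conj_list False by blast
qed (simp add: seq_formula_def tautology_imp_derives)

end

inductive hilbert_from :: "form set \<Rightarrow> form \<Rightarrow> bool" for S :: "form set" where
  hyp: "p \<in> S \<Longrightarrow> hilbert_from S p"
| axiom: "hilbert p \<Longrightarrow> hilbert_from S p"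
| mp: "hilbert_from S a \<Longrightarrow> hilbert_from S (Imp a b) \<Longrightarrow> hilbert_from S b"

lemma hilbert_from_mono: "hilbert_from S p \<Longrightarrow> S \<subseteq> S' \<Longrightarrow> hilbert_from S' p"
  by (induction rule: hilbert_from.induct)
    (auto intro: hilbert_from.hyp hilbert_from.axiom dest: hilbert_from.mp)

lemma hilbert_from_empty: "hilbert_from {} p \<Longrightarrow> hilbert p"
  by (induction rule: hilbert_from.induct) (auto dest: hilbert.mp)

lemma hilbert_Imp_self: "hilbert (Imp a a)"
  using hilbert.mp[OF ax1a hilbert.mp[OF ax1a ax1b]] .

lemma hilbert_from_deduction: "hilbert_from (insert a S) b \<Longrightarrow> hilbert_from S (Imp a b)"
proof (induction rule: hilbert_from.induct)
  case (hyp p)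
  then show ?case
    by (metis ax1a hilbert_Imp_self hilbert_from.intros insert_iff)
next
  case (axiom p)
  then show ?case
    by (metis ax1a hilbert_from.intros)
next
  case (mp p q)
  then show ?case
    by (metis ax1b hilbert_from.intros(2,3))
qed

interpretation Hilbert: classical_consequence "\<lambda>G. hilbert_from (set G)"
proof
  fix G G' :: "form list" and a b p :: form
  let ?S = "set G"
  show "hilbert_from ?S p \<Longrightarrow> ?S \<subseteq> set G' \<Longrightarrow> hilbert_from (set G') p"
    by (rule hilbert_from_mono)
  show "hilbert_from (set [p]) p"
    by (simp add: hilbert_from.hyp)
  show "hilbert_from (set (a # G)) b \<Longrightarrow> hilbert_from ?S (Imp a b)"
    by (simp add: hilbert_from_deduction)
  show "hilbert_from ?S (Imp a b) \<Longrightarrow> hilbert_from ?S a \<Longrightarrow> hilbert_from ?S b"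
    by (rule hilbert_from.mp)
  show "hilbert_from ?S a \<Longrightarrow> hilbert_from ?S b \<Longrightarrow> hilbert_from ?S (And a b)"
    using hilbert_from.mp[OF _ hilbert_from.mp[OF _ hilbert_from.axiom[OF ax3]]] .
  show "hilbert_from ?S (And a b) \<Longrightarrow> hilbert_from ?S a"
    using hilbert_from.mp[OF _ hilbert_from.axiom[OF ax4a]] .
  show "hilbert_from ?S (And a b) \<Longrightarrow> hilbert_from ?S b"
    using hilbert_from.mp[OF _ hilbert_from.axiom[OF ax4b]] .
  show "hilbert_from ?S (Neg (Neg a)) \<Longrightarrow> hilbert_from ?S a"
    using hilbert_from.mp[OF _ hilbert_from.axiom[OF ax8]] .
  assume "hilbert_from (set (a # G)) b" "hilbert_from (set (a # G)) (Neg b)"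
  then have "hilbert_from ?S (Imp a b)" "hilbert_from ?S (Imp a (Neg b))"
    by (simp_all add: hilbert_from_deduction)
  then show "hilbert_from ?S (Neg a)"
    using hilbert_from.mp[OF _ hilbert_from.mp[OF _ hilbert_from.axiom[OF ax7]]] by blast
qed

lemma nom_exchange_perm:
  assumes "nom_deriv True G q" "mset G = mset G'"
  shows "nom_deriv True G' q"
  using swap_closed_imp_mset_closed[of "\<lambda>G. nom_deriv True G q" "[]",
      OF nom_deriv.exchange[OF TrueI]] assms by simp

(* NOM has no weakening rule: exchange turns the assumption G, r, q |- q into G, q, r |- q,
   imp-introduction discharges r, cut removes q, and imp-elimination restores r. *)
lemma nom_exchange_weaken: "nom_deriv True G q \<Longrightarrow> nom_deriv True (r # G) q"
proof -
  assume q: "nom_deriv True G q"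
  have "nom_deriv True (G @ [r, q] @ []) q"
    using nom_deriv.assumption[of True "G @ [r]" q] by simp
  then have "nom_deriv True (G @ [q]) (Imp r q)"
    using nom_deriv.exchange[of True G r q "[]"] nom_deriv.imp_intro by simp
  then have "nom_deriv True (G @ [r]) q"
    using nom_deriv.cut[OF q] nom_deriv.imp_elim by blast
  then show ?thesis
    by (rule nom_exchange_perm) simp
qed

lemma nom_exchange_contract: "nom_deriv True (r # r # G) q \<Longrightarrow> nom_deriv True (r # G) q"
proof -
  assume "nom_deriv True (r # r # G) q"
  then have "nom_deriv True ((G @ [r]) @ [r]) q"
    by (rule nom_exchange_perm) simp
  then have "nom_deriv True (G @ [r]) q"
    by (rule nom_deriv.cut[OF nom_deriv.assumption])
  then show ?thesis
    by (rule nom_exchange_perm) simp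
qed

lemma nom_exchange_subset:
  assumes "nom_deriv True G q" "set G \<subseteq> set G'"
  shows "nom_deriv True G' q"
  using structural_imp_subset_closed[of "\<lambda>G. nom_deriv True G q",
      OF nom_deriv.exchange[OF TrueI] nom_exchange_weaken nom_exchange_contract assms] .

interpretation NOM: classical_consequence "nom_deriv True"
proof
  fix G G' :: "form list" and a b p :: form
  show "nom_deriv True G p \<Longrightarrow> set G \<subseteq> set G' \<Longrightarrow> nom_deriv True G' p"
    by (rule nom_exchange_subset)
  show "nom_deriv True [p] p"
    using nom_deriv.assumption[of True "[]"] by simp
  show "nom_deriv True (a # G) b \<Longrightarrow> nom_deriv True G (Imp a b)"
    by (rule nom_deriv.imp_intro, erule nom_exchange_subset) simp
  show "nom_deriv True G (Imp a b) \<Longrightarrow> nom_deriv True G a \<Longrightarrow> nom_deriv True G b"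
    using nom_deriv.cut[OF _ nom_deriv.imp_elim] .
  show "nom_deriv True G a \<Longrightarrow> nom_deriv True G b \<Longrightarrow> nom_deriv True G (And a b)"
    by (rule nom_deriv.conj_intro)
  show "nom_deriv True G (And a b) \<Longrightarrow> nom_deriv True G a"
    by (rule nom_deriv.conj_elim1)
  show "nom_deriv True G (And a b) \<Longrightarrow> nom_deriv True G b"
    by (rule nom_deriv.conj_elim2)
  show "nom_deriv True G (Neg (Neg a)) \<Longrightarrow> nom_deriv True G a"
    by (rule nom_deriv.excluded_middle[OF nom_deriv.assumption nom_deriv.explosion])
  assume "nom_deriv True (a # G) b" "nom_deriv True (a # G) (Neg b)"
  then have "nom_deriv True (G @ [a]) b" "nom_deriv True (G @ [a]) (Neg b)"
    using nom_exchange_subset[of "a # G" _ "G @ [a]"] by simp_all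
  then have "nom_deriv True (G @ [a]) (Neg a)"
    using nom_deriv.cut[OF _ nom_deriv.explosion] by blast
  then show "nom_deriv True G (Neg a)"
    by (rule nom_deriv.excluded_middle[OF _ nom_deriv.assumption])
qed

lemma lk_subset:
  assumes "lk G T" "set G \<subseteq> set G'"
  shows "lk G' T"
  using structural_imp_subset_closed[of "\<lambda>G. lk G T", OF lk.inter_l lk.thin_l lk.contr_l assms] .

lemma lk_cut_context: "lk G [c] \<Longrightarrow> lk (c # G) T \<Longrightarrow> lk G T"
  using lk.cut[of G "[]" c G T] lk_subset[of "G @ G" T G] by simp

interpretation LK: classical_consequence "\<lambda>G p. lk G [p]"
proof
  fix G G' :: "form list" and a b p :: form
  show "lk G [p] \<Longrightarrow> set G \<subseteq> set G' \<Longrightarrow> lk G' [p]"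
    by (rule lk_subset)
  show "lk [p] [p]"
    by (rule lk.axiom)
  show "lk (a # G) [b] \<Longrightarrow> lk G [Imp a b]"
    using lk.imp_r[of a G "[]" b] by simp
  show "lk G [a] \<Longrightarrow> lk G [b] \<Longrightarrow> lk G [And a b]"
    using lk.and_r[of G "[]" a b] by simp
  show "lk G [And a b] \<Longrightarrow> lk G [a]"
    by (erule lk_cut_context, rule lk.and_l1, rule lk_subset[OF lk.axiom]) simp
  show "lk G [And a b] \<Longrightarrow> lk G [b]"
    by (erule lk_cut_context, rule lk.and_l2, rule lk_subset[OF lk.axiom]) simp
  show "lk G [Imp a b] \<Longrightarrow> lk G [a] \<Longrightarrow> lk G [b]"
  proof -
    assume "lk G [Imp a b]" "lk G [a]"
    moreover have "lk (b # G) [b]"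
      by (rule lk_subset[OF lk.axiom]) simp
    ultimately have "lk (Imp a b # G @ G) [b]"
      using lk.imp_l[of G "[]" a b G "[b]"] by simp
    then have "lk (Imp a b # G) [b]"
      by (rule lk_subset) auto
    then show ?thesis
      by (rule lk_cut_context[OF \<open>lk G [Imp a b]\<close>])
  qed
  have "lk [Neg (Neg a)] [a]"
    using lk.neg_r[of a "[]" "[a]"] lk.neg_l[of "[]" "[a]" "Neg a"] lk.axiom by simp
  then have "lk (Neg (Neg a) # G) [a]"
    by (rule lk_subset) simp
  then show "lk G [Neg (Neg a)] \<Longrightarrow> lk G [a]"
    using lk_cut_context by blast
  assume b: "lk (a # G) [b]" and neg_b: "lk (a # G) [Neg b]"
  have "lk (Neg b # a # G) []"
    using lk.neg_l[of "a # G" "[]" b] b by simp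
  then have "lk (a # G) []"
    by (rule lk_cut_context[OF neg_b])
  then show "lk G [Neg a]"
    using lk.neg_r[of a G "[]"] by simp
qed

theorem theorem3p2:
  fixes phis :: "form list" and psi0 :: form
  shows "(nom_deriv True phis psi0 \<longleftrightarrow> lk phis [psi0])
       \<and> (lk phis [psi0] \<longleftrightarrow> hilbert (seq_formula phis psi0))
       \<and> (hilbert (seq_formula phis psi0) \<longleftrightarrow> tautology (seq_formula phis psi0))"
proof -
  let ?tautology = "tautology (seq_formula phis psi0)"
  have nom: "nom_deriv True phis psi0 \<longleftrightarrow> ?tautology"
    using nom_deriv_sound NOM.seq_formula_tautology_imp_derives
    by (auto simp: tautology_seq_formula_iff)
  have lk: "lk phis [psi0] \<longleftrightarrow> ?tautology"
    using lk_sound LK.seq_formula_tautology_imp_derives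
    by (fastforce simp: tautology_seq_formula_iff)
  have hilbert: "hilbert (seq_formula phis psi0) \<longleftrightarrow> ?tautology"
    using hilbert_sound Hilbert.tautology_imp_derives hilbert_from_empty
    by (auto simp: tautology_def)
  show ?thesis
    using nom lk hilbert by blast
qed

end
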